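(* For $\theta>0$ let $\Phi(1,\theta+1,\theta)=\sum_{n\ge0}\theta^n/(\theta+1)_n$ and let $\varphi_\theta$ be the probability on $D=\{1,2,\dots\}$ given by $$\varphi_\theta(d)=\frac{1}{\Phi(1,\theta+1,\theta)-1}\cdot\frac{\theta^d}{(\theta+1)_d}\qquad(d\in D).$$ Let $\tilde d_1,\tilde d_2,\dots$ be the coordinate maps on $D^\infty$, $\bar d^{(n)}=\frac1n\sum_{k=1}^n\tilde d_k$, let $\theta_0>0$, and let $$D_0=\Big\{(d_1,d_2,\dots)\in D^\infty:\exists n_0\text{ such that }\tfrac1n\textstyle\sum_{k=1}^n d_k>1\text{ for every }n\ge n_0\Big\}.$$ Then $\varphi_{\theta_0}^\infty(D_0)=1$, where $\varphi^\infty_{\theta_0}$ is the product measure. Moreover, for each point of $D_0$ and each $n\ge n_0$, the equation $$\Phi(1,\theta+1,\theta)=1+\frac{\theta}{\bar d^{(n)}}$$ has a unique solution $\theta>0$.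
   Context: $(a)_n$ denotes the rising factorial $a(a+1)\cdots(a+n-1)$, $(a)_0=1$. *)

theory Defs
  imports "HOL-Probability.Probability"
begin

definition Phi :: "real \<Rightarrow> real" where
  "Phi \<theta> = (\<Sum>n. \<theta> ^ n / pochhammer (\<theta> + 1) n)"

definition phi :: "real \<Rightarrow> nat \<Rightarrow> real" where
  "phi \<theta> d = (if d \<ge> 1 then (1 / (Phi \<theta> - 1)) * (\<theta> ^ d / pochhammer (\<theta> + 1) d) else 0)"

definition phi_measure :: "real \<Rightarrow> nat measure" where
  "phi_measure \<theta> = density (count_space UNIV) (\<lambda>d. ennreal (phi \<theta> d))"

text \<open>Infinite product measure phi_theta^infinity; coordinate k (k = 0,1,...)
  corresponds to the paper's coordinate d_{k+1}.\<close>
definition phi_inf :: "real \<Rightarrow> (nat \<Rightarrow> nat) measure" where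
  "phi_inf \<theta> = PiM UNIV (\<lambda>_. phi_measure \<theta>)"

definition dbar :: "nat \<Rightarrow> (nat \<Rightarrow> nat) \<Rightarrow> real" where
  "dbar n \<omega> = (\<Sum>k<n. real (\<omega> k)) / real n"

definition D0 :: "(nat \<Rightarrow> nat) set" where
  "D0 = {\<omega>. (\<forall>k. \<omega> k \<ge> 1) \<and> (\<exists>n0\<ge>1. \<forall>n\<ge>n0. dbar n \<omega> > 1)}"

end

theory Submission
  imports Defs
begin

(* With u_d = theta^d / (theta+1)_d, the contiguity relation (theta + d) u_d = theta u_(d-1) makes
   the tail probabilities of phi_theta add up to theta / (Phi theta - 1), so this is the mean of
   phi_theta and the equation says that the mean equals dbar^(n) > 1.  For a < b the likelihood
   ratio u_d(b) / u_d(a) is strictly increasing in d; hence every tail probability, and so the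
   mean, is strictly increasing in theta.  The mean is continuous, at most theta + 1, and at
   least K/2 at theta = K^2, so it takes every value > 1 exactly once.
   Almost every sequence has all entries in D and, as phi_theta {1} < 1, some entry >= 2; these
   are exactly the points of D0, since one entry >= 2 pushes all later means above 1. *)

lemma suminf_strict_mono:
  fixes f g :: "nat \<Rightarrow> real"
  assumes "summable f" "summable g" "\<And>n. f n \<le> g n" "f i < g i"
  shows "suminf f < suminf g"
proof -
  have "0 < (\<Sum>n. g n - f n)"
    using assms by (intro suminf_pos2[of _ i] summable_diff) auto
  also have "\<dots> = suminf g - suminf f"
    using suminf_diff[OF assms(2,1)] by simp
  finally show ?thesis by simp
qed

lemma tail_ratio_less_if_likelihood_ratio_strict_mono:
  fixes p q :: "nat \<Rightarrow> real"
  assumes p: "\<And>n. p n > 0" "summable p" and q: "\<And>n. q n > 0" "summable q"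
    and lr: "strict_mono (\<lambda>n. q n / p n)" and "j > 0"
  shows "(\<Sum>n. p (j + n)) / suminf p < (\<Sum>n. q (j + n)) / suminf q"
proof -
  define P Q where "P = (\<Sum>n. p (j + n))" and "Q = (\<Sum>n. q (j + n))"
  have sp: "summable (\<lambda>n. p (j + n))" and sq: "summable (\<lambda>n. q (j + n))"
    using summable_ignore_initial_segment[OF p(2), of j] summable_ignore_initial_segment[OF q(2), of j]
    by (simp_all add: add.commute)
  have split_p: "suminf p = (\<Sum>i<j. p i) + P" and split_q: "suminf q = (\<Sum>i<j. q i) + Q"
    using suminf_split_initial_segment[OF p(2), of j] suminf_split_initial_segment[OF q(2), of j]
    by (simp_all add: P_def Q_def add.commute)
  have cross_terms: "p (j + n) * q i < q (j + n) * p i" if "i < j" for i n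
  proof -
    have "q i / p i < q (j + n) / p (j + n)"
      using strict_monoD[OF lr, of i "j + n"] that by simp
    then show ?thesis
      using p(1)[of i] p(1)[of "j + n"] by (simp add: divide_simps mult.commute)
  qed
  then have "(\<Sum>i<j. \<Sum>n. p (j + n) * q i) < (\<Sum>i<j. \<Sum>n. q (j + n) * p i)"
    using \<open>j > 0\<close> sp sq cross_terms[of _ 0]
    by (intro sum_strict_mono suminf_strict_mono[of _ _ 0] summable_mult2 less_imp_le cross_terms) auto
  then have cross: "P * (\<Sum>i<j. q i) < Q * (\<Sum>i<j. p i)"
    unfolding P_def Q_def sum_distrib_left suminf_mult2[OF sp] suminf_mult2[OF sq] .
  have "suminf p > 0" "suminf q > 0"
    using p q by (simp_all add: suminf_pos)
  with cross show ?thesis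
    unfolding P_def[symmetric] Q_def[symmetric] split_p split_q by (simp add: field_simps)
qed

lemma (in sequence_space) Pi_null_sets_if_measure_less_one:
  assumes "A \<in> sets M" "measure M A < 1"
  shows "Pi UNIV (\<lambda>_. A) \<in> null_sets S"
proof -
  have "(\<lambda>n. measure M A ^ Suc n) \<longlonglongrightarrow> measure S (Pi UNIV (\<lambda>_. A))"
    using measure_PiM_countable[of "\<lambda>_. A"] assms(1) by simp
  moreover have "(\<lambda>n. measure M A ^ Suc n) \<longlonglongrightarrow> 0"
    using LIMSEQ_Suc[OF LIMSEQ_power_zero[of "measure M A"]] assms(2) by simp
  ultimately have "measure S (Pi UNIV (\<lambda>_. A)) = 0"
    by (rule LIMSEQ_unique)
  then show ?thesis
    using assms(1) by (auto simp: P.emeasure_eq_measure)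
qed

section \<open>The terms and tails of Phi\<close>

definition Phi_term :: "real \<Rightarrow> nat \<Rightarrow> real" where
  "Phi_term \<theta> n = \<theta> ^ n / pochhammer (\<theta> + 1) n"

lemma Phi_term_0 [simp]: "Phi_term \<theta> 0 = 1"
  by (simp add: Phi_term_def)

lemma Phi_term_1: "Phi_term \<theta> 1 = \<theta> / (\<theta> + 1)"
  by (simp add: Phi_term_def)

lemma Phi_term_Suc: "Phi_term \<theta> (Suc n) = Phi_term \<theta> n * (\<theta> / (\<theta> + 1 + real n))"
  by (simp add: Phi_term_def pochhammer_Suc)

lemma Phi_term_pos: "\<theta> > 0 \<Longrightarrow> Phi_term \<theta> n > 0"
  by (simp add: Phi_term_def pochhammer_pos)

lemma Phi_term_nonneg: "\<theta> \<ge> 0 \<Longrightarrow> Phi_term \<theta> n \<ge> 0"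
  using pochhammer_pos[of "\<theta> + 1" n] by (simp add: Phi_term_def)

lemma Phi_term_add_le:
  assumes "\<theta> \<ge> 0"
  shows "Phi_term \<theta> (m + k) \<le> Phi_term \<theta> m * (\<theta> / (\<theta> + 1 + real m)) ^ k"
proof (induction k)
  case (Suc k)
  define r where "r = \<theta> / (\<theta> + 1 + real m)"
  have r: "r \<ge> 0" using assms by (simp add: r_def)
  have "\<theta> / (\<theta> + 1 + real (m + k)) \<le> r"
    using assms unfolding r_def by (intro divide_left_mono) auto
  then have "Phi_term \<theta> (m + Suc k) \<le> Phi_term \<theta> (m + k) * r"
    unfolding add_Suc_right Phi_term_Suc using assms Phi_term_nonneg by (intro mult_left_mono) auto
  also have "\<dots> \<le> (Phi_term \<theta> m * r ^ k) * r"
    using Suc r unfolding r_def by (intro mult_right_mono)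
  finally show ?case by (simp add: r_def mult_ac)
qed simp

lemma Phi_term_le_power: "\<theta> \<ge> 0 \<Longrightarrow> Phi_term \<theta> n \<le> (\<theta> / (\<theta> + 1)) ^ n"
  using Phi_term_add_le[of \<theta> 0 n] by simp

lemma Phi_term_le_one: "\<theta> \<ge> 0 \<Longrightarrow> Phi_term \<theta> n \<le> 1"
  by (rule order_trans[OF Phi_term_le_power power_le_one]) auto

lemma summable_Phi_term: "\<theta> \<ge> 0 \<Longrightarrow> summable (Phi_term \<theta>)"
  by (rule summable_comparison_test'[OF summable_geometric, of "\<theta> / (\<theta> + 1)" 0])
    (auto simp: Phi_term_nonneg Phi_term_le_power)

lemma Phi_term_LIMSEQ_zero: "\<theta> \<ge> 0 \<Longrightarrow> Phi_term \<theta> \<longlonglongrightarrow> 0"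
  by (rule summable_LIMSEQ_zero[OF summable_Phi_term])

lemma Phi_eq_suminf: "Phi \<theta> = suminf (Phi_term \<theta>)"
  by (simp add: Phi_def Phi_term_def[abs_def])

lemma Phi_term_recurrence:
  assumes "\<theta> \<ge> 0"
  shows "real (Suc n) * Phi_term \<theta> (Suc n) = \<theta> * (Phi_term \<theta> n - Phi_term \<theta> (Suc n))"
  using assms by (simp add: Phi_term_Suc field_simps)

lemma sums_mult_Phi_term:
  assumes "\<theta> \<ge> 0"
  shows "(\<lambda>i. real (Suc (m + i)) * Phi_term \<theta> (Suc (m + i))) sums (\<theta> * Phi_term \<theta> m)"
proof -
  have lim: "(\<lambda>i. \<theta> * Phi_term \<theta> (m + i)) \<longlonglongrightarrow> 0"
    using LIMSEQ_ignore_initial_segment[OF Phi_term_LIMSEQ_zero[OF assms], of m]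
    by (intro tendsto_mult_right_zero) (simp add: add.commute)
  have eq: "real (Suc (m + i)) * Phi_term \<theta> (Suc (m + i))
      = \<theta> * Phi_term \<theta> (m + i) - \<theta> * Phi_term \<theta> (Suc (m + i))" for i
    unfolding right_diff_distrib[symmetric] by (rule Phi_term_recurrence[OF assms])
  show ?thesis
    unfolding eq using telescope_sums'[OF lim] by simp
qed

definition Phi_tail :: "real \<Rightarrow> nat \<Rightarrow> real" where
  "Phi_tail \<theta> j = (\<Sum>i. Phi_term \<theta> (j + i))"

lemma summable_Phi_term_shift: "\<theta> \<ge> 0 \<Longrightarrow> summable (\<lambda>i. Phi_term \<theta> (j + i))"
  using summable_ignore_initial_segment[OF summable_Phi_term, of \<theta> j] by (simp add: add.commute)

lemma Phi_tail_split: "\<theta> \<ge> 0 \<Longrightarrow> Phi_tail \<theta> j = Phi_term \<theta> j + Phi_tail \<theta> (Suc j)"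
  using suminf_split_head[OF summable_Phi_term_shift, of \<theta> j] by (simp add: Phi_tail_def)

lemma Phi_tail_nonneg: "\<theta> \<ge> 0 \<Longrightarrow> Phi_tail \<theta> j \<ge> 0"
  unfolding Phi_tail_def by (intro suminf_nonneg summable_Phi_term_shift Phi_term_nonneg)

lemma Phi_tail_pos: "\<theta> > 0 \<Longrightarrow> Phi_tail \<theta> j > 0"
  using Phi_tail_split[of \<theta> j] Phi_tail_nonneg[of \<theta> "Suc j"] Phi_term_pos[of \<theta> j] by simp

lemma Phi_eq_Phi_tail: "\<theta> \<ge> 0 \<Longrightarrow> Phi \<theta> = 1 + Phi_tail \<theta> 1"
  using Phi_tail_split[of \<theta> 0] by (simp add: Phi_eq_suminf Phi_tail_def)

lemma Phi_term_one_le_Phi_tail: "\<theta> \<ge> 0 \<Longrightarrow> Phi_term \<theta> 1 \<le> Phi_tail \<theta> 1"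
  using Phi_tail_split[of \<theta> 1] Phi_tail_nonneg[of \<theta> 2] by (simp add: numeral_2_eq_2)

lemma mult_Phi_tail_le:
  assumes "\<theta> \<ge> 0"
  shows "real m * Phi_tail \<theta> (Suc m) \<le> \<theta> * Phi_term \<theta> m"
proof -
  have summable: "summable (\<lambda>i. Phi_term \<theta> (Suc (m + i)))"
    using summable_Phi_term_shift[OF assms, of "Suc m"] by simp
  have "real m * Phi_tail \<theta> (Suc m) = (\<Sum>i. real m * Phi_term \<theta> (Suc (m + i)))"
    using suminf_mult[OF summable] by (simp add: Phi_tail_def)
  also have "\<dots> \<le> (\<Sum>i. real (Suc (m + i)) * Phi_term \<theta> (Suc (m + i)))"
    using summable_mult[OF summable] sums_summable[OF sums_mult_Phi_term[OF assms]]
      Phi_term_nonneg[OF assms]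
    by (intro suminf_le mult_right_mono) auto
  also have "\<dots> = \<theta> * Phi_term \<theta> m"
    using sums_mult_Phi_term[OF assms] by (simp add: sums_iff)
  finally show ?thesis .
qed

lemma sum_Phi_tail:
  assumes "\<theta> \<ge> 0"
  shows "(\<Sum>j<m. Phi_tail \<theta> (Suc j)) = \<theta> * (1 - Phi_term \<theta> m) + real m * Phi_tail \<theta> (Suc m)"
proof (induction m)
  case (Suc m)
  have "(\<Sum>j<Suc m. Phi_tail \<theta> (Suc j))
      = \<theta> * (1 - Phi_term \<theta> m) + real (Suc m) * Phi_tail \<theta> (Suc m)"
    using Suc by (simp add: algebra_simps)
  also have "\<dots> = \<theta> * (1 - Phi_term \<theta> (Suc m)) + real (Suc m) * Phi_tail \<theta> (Suc (Suc m))"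
    using Phi_tail_split[OF assms, of "Suc m"] Phi_term_recurrence[OF assms, of m]
    by (simp only: distrib_left) (simp add: algebra_simps)
  finally show ?case .
qed simp

lemma sums_Phi_tail:
  assumes "\<theta> \<ge> 0"
  shows "(\<lambda>j. Phi_tail \<theta> (Suc j)) sums \<theta>"
  unfolding sums_def
proof (rule tendsto_sandwich[of "\<lambda>m. \<theta> * (1 - Phi_term \<theta> m)" _ _ "\<lambda>_. \<theta>"])
  show "\<forall>\<^sub>F m in sequentially. \<theta> * (1 - Phi_term \<theta> m) \<le> (\<Sum>j<m. Phi_tail \<theta> (Suc j))"
    using sum_Phi_tail[OF assms] Phi_tail_nonneg[OF assms] by (auto intro!: always_eventually)
  show "\<forall>\<^sub>F m in sequentially. (\<Sum>j<m. Phi_tail \<theta> (Suc j)) \<le> \<theta>"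
  proof (intro always_eventually allI)
    show "(\<Sum>j<m. Phi_tail \<theta> (Suc j)) \<le> \<theta>" for m
      using sum_Phi_tail[OF assms, of m] mult_Phi_tail_le[OF assms, of m] by (simp add: algebra_simps)
  qed
  show "(\<lambda>m. \<theta> * (1 - Phi_term \<theta> m)) \<longlonglongrightarrow> \<theta>"
    using Phi_term_LIMSEQ_zero[OF assms] by (auto intro!: tendsto_eq_intros)
qed simp

section \<open>The mean of phi is strictly increasing\<close>

lemma Phi_term_ratio_strict_mono:
  assumes "0 < a" "a < b"
  shows "strict_mono (\<lambda>n. Phi_term b n / Phi_term a n)"
proof (rule strict_mono_Suc_iff[THEN iffD2], intro allI)
  fix n
  define x y where "x = b / (b + 1 + real n)" and "y = a / (a + 1 + real n)"
  have "0 < y"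
    using assms by (simp add: y_def add_pos_nonneg)
  moreover have "y < x"
    using assms mult_right_mono[of a b "real n"]
    by (simp add: x_def y_def divide_simps algebra_simps add_pos_nonneg)
  ultimately have "1 < x / y"
    by simp
  moreover have "0 < Phi_term b n / Phi_term a n"
    using assms Phi_term_pos[of a n] Phi_term_pos[of b n] by simp
  ultimately have "Phi_term b n / Phi_term a n < (Phi_term b n / Phi_term a n) * (x / y)"
    using mult_strict_left_mono[of 1 "x / y"] by (simp only: mult_1_right)
  also have "\<dots> = Phi_term b (Suc n) / Phi_term a (Suc n)"
    by (simp add: Phi_term_Suc x_def y_def mult_ac)
  finally show "Phi_term b n / Phi_term a n < Phi_term b (Suc n) / Phi_term a (Suc n)" .
qed

lemma Phi_tail_ratio_less:
  assumes "0 < a" "a < b" "j > 0"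
  shows "Phi_tail a (Suc j) / Phi_tail a 1 < Phi_tail b (Suc j) / Phi_tail b 1"
proof -
  have "strict_mono (\<lambda>n. Phi_term b (Suc n) / Phi_term a (Suc n))"
    using Phi_term_ratio_strict_mono[OF assms(1,2)] by (simp add: strict_mono_Suc_iff)
  with assms have "(\<Sum>n. Phi_term a (Suc (j + n))) / (\<Sum>n. Phi_term a (Suc n))
      < (\<Sum>n. Phi_term b (Suc (j + n))) / (\<Sum>n. Phi_term b (Suc n))"
    using summable_Phi_term_shift[of _ 1]
    by (intro tail_ratio_less_if_likelihood_ratio_strict_mono[where p = "\<lambda>n. Phi_term a (Suc n)"])
      (auto intro: Phi_term_pos)
  then show ?thesis by (simp add: Phi_tail_def)
qed

text \<open>The mean of \<open>phi \<theta>\<close>: the tail probabilities \<open>phi \<theta> {d. d > j} = Phi_tail \<theta> (Suc j) / Phi_tail \<theta> 1\<close>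
  add up to it by sums_Phi_tail.\<close>
definition phi_mean :: "real \<Rightarrow> real" where
  "phi_mean \<theta> = \<theta> / (Phi \<theta> - 1)"

lemma phi_mean_eq: "\<theta> \<ge> 0 \<Longrightarrow> phi_mean \<theta> = \<theta> / Phi_tail \<theta> 1"
  by (simp add: phi_mean_def Phi_eq_Phi_tail)

lemma phi_mean_strict_mono:
  assumes "0 < a" "a < b"
  shows "phi_mean a < phi_mean b"
proof -
  have sums: "(\<lambda>j. Phi_tail \<theta> (Suc j) / Phi_tail \<theta> 1) sums phi_mean \<theta>" if "\<theta> > 0" for \<theta>
    using sums_divide[OF sums_Phi_tail] that by (simp add: phi_mean_eq)
  have "Phi_tail a (Suc j) / Phi_tail a 1 \<le> Phi_tail b (Suc j) / Phi_tail b 1" for j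
    using Phi_tail_ratio_less[OF assms, of j] Phi_tail_pos[of a 1] Phi_tail_pos[of b 1] assms
    by (cases "j = 0") auto
  then have "(\<Sum>j. Phi_tail a (Suc j) / Phi_tail a 1) < (\<Sum>j. Phi_tail b (Suc j) / Phi_tail b 1)"
    using sums[of a] sums[of b] Phi_tail_ratio_less[OF assms, of 1] assms
    by (intro suminf_strict_mono[of _ _ 1]) (auto simp: sums_iff)
  then show ?thesis
    using sums[of a] sums[of b] assms by (simp add: sums_iff)
qed

section \<open>Solving the moment equation\<close>

lemma continuous_on_Phi: "continuous_on {0..b} Phi"
proof -
  define r where "r = \<bar>b\<bar> / (\<bar>b\<bar> + 1)"
  have "uniform_limit {0..b} (\<lambda>n \<theta>. \<Sum>i<n. Phi_term \<theta> i) (\<lambda>\<theta>. \<Sum>i. Phi_term \<theta> i) sequentially"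
  proof (rule Weierstrass_m_test)
    show "summable (\<lambda>n. r ^ n)"
      by (simp add: r_def)
    fix n \<theta> assume "\<theta> \<in> {0..b}"
    then have "\<theta> / (\<theta> + 1) \<le> r"
      by (simp add: r_def divide_simps algebra_simps)
    then have "(\<theta> / (\<theta> + 1)) ^ n \<le> r ^ n"
      using \<open>\<theta> \<in> {0..b}\<close> by (intro power_mono) auto
    then show "norm (Phi_term \<theta> n) \<le> r ^ n"
      using \<open>\<theta> \<in> {0..b}\<close> Phi_term_le_power[of \<theta> n] Phi_term_nonneg[of \<theta> n] by simp
  qed
  moreover have "continuous_on {0..b} (\<lambda>\<theta>. Phi_term \<theta> i)" for i
    unfolding Phi_term_def
    by (intro continuous_intros) (auto simp: pochhammer_eq_0_iff)
  ultimately show ?thesis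
    unfolding Phi_eq_suminf[abs_def]
    by (intro uniform_limit_theorem) (auto intro!: always_eventually continuous_on_sum)
qed

lemma continuous_on_phi_mean:
  assumes "a > 0"
  shows "continuous_on {a..b} phi_mean"
proof -
  have "continuous_on {a..b} Phi"
    by (rule continuous_on_subset[OF continuous_on_Phi]) (use assms in auto)
  moreover have "\<theta> \<in> {a..b} \<Longrightarrow> Phi \<theta> - 1 \<noteq> 0" for \<theta>
    using assms Phi_eq_Phi_tail[of \<theta>] Phi_tail_pos[of \<theta> 1] by auto
  ultimately show ?thesis
    unfolding phi_mean_def[abs_def] by (intro continuous_intros) auto
qed

lemma phi_mean_le:
  assumes "\<theta> > 0"
  shows "phi_mean \<theta> \<le> \<theta> + 1"
proof -
  have "\<theta> / Phi_tail \<theta> 1 \<le> \<theta> / Phi_term \<theta> 1"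
    using assms Phi_term_one_le_Phi_tail[of \<theta>] Phi_term_pos[of \<theta> 1] by (intro divide_left_mono) auto
  from this[unfolded Phi_term_1] show ?thesis
    using assms by (simp add: phi_mean_eq)
qed

lemma Phi_le:
  assumes "\<theta> \<ge> 0"
  shows "Phi \<theta> \<le> real K + (\<theta> + 1 + K) / (1 + K)"
proof -
  define r where "r = \<theta> / (\<theta> + 1 + K)"
  have r: "0 \<le> r" "r < 1"
    using assms by (auto simp: r_def)
  have "(\<Sum>i<K. Phi_term \<theta> i) \<le> (\<Sum>i<K. 1)"
    using Phi_term_le_one[OF assms] by (intro sum_mono) auto
  moreover have "(\<Sum>n. Phi_term \<theta> (n + K)) \<le> (\<Sum>n. r ^ n)"
  proof (rule suminf_le)
    fix n
    have "Phi_term \<theta> (K + n) \<le> Phi_term \<theta> K * r ^ n"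
      using Phi_term_add_le[OF assms, of K n] by (simp add: r_def add_ac)
    also have "\<dots> \<le> r ^ n"
      using r assms by (intro mult_left_le_one_le Phi_term_nonneg Phi_term_le_one) auto
    finally show "Phi_term \<theta> (n + K) \<le> r ^ n"
      by (simp add: add.commute)
  qed (use summable_Phi_term_shift[OF assms, of K] r in \<open>simp_all add: add.commute\<close>)
  moreover have "(\<Sum>n. r ^ n) = 1 / (1 - r)"
    using r by (intro suminf_geometric) auto
  moreover have "1 / (1 - r) = (\<theta> + 1 + K) / (1 + K)"
    using assms by (simp add: r_def field_simps)
  ultimately show ?thesis
    using suminf_split_initial_segment[OF summable_Phi_term[OF assms], of K]
    by (simp add: Phi_eq_suminf)
qed

lemma phi_mean_square_ge:
  assumes "K \<ge> 1"
  shows "real K / 2 \<le> phi_mean (real K ^ 2)"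
proof -
  have "(real K ^ 2 + 1 + K) / (1 + K) \<le> real K + 1"
    by (simp add: field_simps power2_eq_square)
  then have "Phi (real K ^ 2) - 1 \<le> 2 * real K"
    using Phi_le[of "real K ^ 2" K] by simp
  moreover have "Phi (real K ^ 2) - 1 > 0"
    using assms Phi_eq_Phi_tail[of "real K ^ 2"] Phi_tail_pos[of "real K ^ 2" 1] by simp
  ultimately have "real K ^ 2 / (2 * real K) \<le> phi_mean (real K ^ 2)"
    unfolding phi_mean_def using assms by (intro divide_left_mono) auto
  then show ?thesis
    using assms by (simp add: power2_eq_square)
qed

lemma phi_mean_surj:
  assumes "M > 1"
  obtains \<theta> where "\<theta> > 0" "phi_mean \<theta> = M"
proof -
  define a where "a = (M - 1) / 2"
  define K where "K = nat \<lceil>2 * M\<rceil>"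
  have a: "a > 0" "a + 1 \<le> M"
    using assms by (simp_all add: a_def field_simps)
  have K: "K \<ge> 1" "2 * M \<le> real K"
    using assms by (simp_all add: K_def) linarith
  have "real K \<le> real K ^ 2"
    using K(1) by (simp add: power2_eq_square)
  with a K have "a \<le> real K ^ 2"
    by linarith
  moreover have "phi_mean a \<le> M"
    using phi_mean_le[OF a(1)] a(2) by simp
  moreover have "M \<le> phi_mean (real K ^ 2)"
    using phi_mean_square_ge[OF K(1)] K(2) by simp
  ultimately obtain \<theta> where "a \<le> \<theta>" "phi_mean \<theta> = M"
    using IVT'[of phi_mean a M "real K ^ 2"] continuous_on_phi_mean[OF a(1)] by blast
  with a show ?thesis
    by (intro that) auto
qed

lemma ex1_Phi_eq:
  assumes "M > 1"
  shows "\<exists>!\<theta>. \<theta> > 0 \<and> Phi \<theta> = 1 + \<theta> / M"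
proof -
  have iff: "Phi \<theta> = 1 + \<theta> / M \<longleftrightarrow> phi_mean \<theta> = M" if "\<theta> > 0" for \<theta>
  proof -
    have "Phi \<theta> - 1 > 0"
      using that Phi_eq_Phi_tail[of \<theta>] Phi_tail_pos[of \<theta> 1] by simp
    with assms show ?thesis
      unfolding phi_mean_def by (auto simp: field_simps)
  qed
  obtain \<theta> where "\<theta> > 0" "phi_mean \<theta> = M"
    using phi_mean_surj[OF assms] .
  moreover have "s = \<theta>" if "s > 0" "phi_mean s = M" for s
    using phi_mean_strict_mono[of s \<theta>] phi_mean_strict_mono[of \<theta> s] that \<open>\<theta> > 0\<close> \<open>phi_mean \<theta> = M\<close>
    by (cases s \<theta> rule: linorder_cases) auto
  ultimately show ?thesis
    using iff by blast
qed

section \<open>The measure of D0\<close>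

lemma phi_eq: "\<theta> > 0 \<Longrightarrow> phi \<theta> d = (if d \<ge> 1 then Phi_term \<theta> d / Phi_tail \<theta> 1 else 0)"
  by (simp add: phi_def Phi_term_def Phi_eq_Phi_tail)

lemma phi_nonneg: "\<theta> > 0 \<Longrightarrow> phi \<theta> d \<ge> 0"
  using Phi_term_pos[of \<theta> d] Phi_tail_pos[of \<theta> 1] by (simp add: phi_eq)

lemma phi_pos: "\<theta> > 0 \<Longrightarrow> d \<ge> 1 \<Longrightarrow> phi \<theta> d > 0"
  using Phi_term_pos[of \<theta> d] Phi_tail_pos[of \<theta> 1] by (simp add: phi_eq)

lemma phi_sums:
  assumes "\<theta> > 0"
  shows "phi \<theta> sums 1"
proof -
  have "(\<lambda>n. Phi_term \<theta> (Suc n) / Phi_tail \<theta> 1) sums (Phi_tail \<theta> 1 / Phi_tail \<theta> 1)"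
    using summable_sums[OF summable_Phi_term_shift[of \<theta> 1]] assms
    by (intro sums_divide) (simp add: Phi_tail_def)
  then have "(\<lambda>n. phi \<theta> (Suc n)) sums 1"
    using assms Phi_tail_pos[of \<theta> 1] by (simp add: phi_eq)
  then show ?thesis
    using sums_Suc_iff[of "phi \<theta>" 1] by (simp add: phi_def)
qed

lemma space_phi_measure [simp]: "space (phi_measure \<theta>) = UNIV"
  by (simp add: phi_measure_def)

lemma sets_phi_measure [simp, measurable_cong]: "sets (phi_measure \<theta>) = sets (count_space UNIV)"
  by (simp add: phi_measure_def)

lemma emeasure_phi_measure_singleton: "emeasure (phi_measure \<theta>) {d} = ennreal (phi \<theta> d)"
  by (simp add: phi_measure_def emeasure_density)

lemma prob_space_phi_measure:
  assumes "\<theta> > 0"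
  shows "prob_space (phi_measure \<theta>)"
proof
  have "emeasure (phi_measure \<theta>) (space (phi_measure \<theta>)) = (\<Sum>n. ennreal (phi \<theta> n))"
    by (simp add: phi_measure_def emeasure_density nn_integral_count_space_nat)
  also have "\<dots> = 1"
    using phi_sums[OF assms] phi_nonneg[OF assms] by (simp add: suminf_ennreal2 sums_iff)
  finally show "emeasure (phi_measure \<theta>) (space (phi_measure \<theta>)) = 1" .
qed

lemma measure_phi_measure_atMost_one_less:
  assumes "\<theta> > 0"
  shows "measure (phi_measure \<theta>) {..1} < 1"
proof -
  interpret prob_space "phi_measure \<theta>"
    by (rule prob_space_phi_measure[OF assms])
  have "0 < measure (phi_measure \<theta>) {2}"
    using emeasure_phi_measure_singleton[of \<theta> 2] phi_pos[OF assms, of 2] phi_nonneg[OF assms, of 2]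
    by (simp add: emeasure_eq_measure)
  moreover have "measure (phi_measure \<theta>) {..1} + measure (phi_measure \<theta>) {2} \<le> 1"
    using finite_measure_Union[of "{..1}" "{2}"] prob_le_1[of "{..1} \<union> {2}"] by (simp add: phi_measure_def)
  ultimately show ?thesis
    by simp
qed

lemma one_less_dbar:
  assumes "\<forall>i. 1 \<le> \<omega> i" "2 \<le> \<omega> k" "k < n"
  shows "1 < dbar n \<omega>"
proof -
  have "real n + 1 = (\<Sum>i<n. 1 + (if i = k then 1 else 0 :: real))"
    using assms(3) by (simp add: sum.distrib)
  also have "\<dots> \<le> (\<Sum>i<n. real (\<omega> i))"
    using assms(1,2) by (intro sum_mono) auto
  finally show ?thesis
    using assms(3) by (simp add: dbar_def field_simps)
qed

lemma D0_eq: "D0 = {\<omega>. (\<forall>k. 1 \<le> \<omega> k) \<and> (\<exists>k. 2 \<le> \<omega> k)}"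
proof (intro set_eqI iffI)
  fix \<omega> assume "\<omega> \<in> D0"
  then obtain n where ge1: "\<forall>k. 1 \<le> \<omega> k" and n: "n \<ge> 1" "dbar n \<omega> > 1"
    unfolding D0_def by auto
  have "\<exists>k. 2 \<le> \<omega> k"
  proof (rule ccontr)
    assume "\<nexists>k. 2 \<le> \<omega> k"
    with ge1 have "\<omega> k = 1" for k
      by (metis le_antisym not_less_eq_eq numeral_2_eq_2 One_nat_def)
    with n show False
      by (simp add: dbar_def)
  qed
  with ge1 show "\<omega> \<in> {\<omega>. (\<forall>k. 1 \<le> \<omega> k) \<and> (\<exists>k. 2 \<le> \<omega> k)}"
    by blast
next
  fix \<omega> :: "nat \<Rightarrow> nat" assume "\<omega> \<in> {\<omega>. (\<forall>k. 1 \<le> \<omega> k) \<and> (\<exists>k. 2 \<le> \<omega> k)}"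
  then obtain k where "\<forall>i. 1 \<le> \<omega> i" "2 \<le> \<omega> k"
    by blast
  then show "\<omega> \<in> D0"
    unfolding D0_def using one_less_dbar by (intro CollectI conjI exI[of _ "Suc k"]) auto
qed

lemma emeasure_phi_inf_D0:
  assumes "\<theta> > 0"
  shows "emeasure (phi_inf \<theta>) D0 = 1"
proof -
  interpret sequence_space "phi_measure \<theta>"
    by (simp add: sequence_space_def product_prob_space_def product_prob_space_axioms_def
        product_sigma_finite_def prob_space_phi_measure[OF assms] prob_space_imp_sigma_finite)
  have "AE \<omega> in S. \<forall>k. 1 \<le> \<omega> k"
  proof (subst AE_all_countable, intro allI AE_component)
    have "{0} \<in> null_sets (phi_measure \<theta>)"
      using emeasure_phi_measure_singleton[of \<theta> 0] by (intro null_setsI) (simp_all add: phi_def)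
    then show "AE x in phi_measure \<theta>. 1 \<le> x"
      by (rule AE_I') auto
  qed simp
  moreover have "AE \<omega> in S. \<omega> \<notin> Pi UNIV (\<lambda>_. {..1})"
    using Pi_null_sets_if_measure_less_one measure_phi_measure_atMost_one_less[OF assms]
    by (intro AE_not_in) simp
  ultimately have "AE \<omega> in S. \<omega> \<in> D0"
    unfolding D0_eq by eventually_elim (auto simp: not_le less_Suc_eq_le numeral_2_eq_2)
  moreover have "D0 \<in> sets S"
  proof -
    have "{\<omega> \<in> space S. (\<forall>k. 1 \<le> \<omega> k) \<and> (\<exists>k. 2 \<le> \<omega> k)} \<in> sets S"
      by measurable
    then show ?thesis
      by (simp add: D0_eq space_PiM)
  qed
  ultimately show ?thesis
    unfolding phi_inf_def by (rule P.emeasure_eq_1_AE[rotated])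
qed

theorem mainTheorem7:
  fixes \<theta>0 :: real
  assumes "\<theta>0 > 0"
  shows "emeasure (phi_inf \<theta>0) D0 = 1
    \<and> (\<forall>\<omega>\<in>D0. \<forall>n0::nat. (n0 \<ge> 1 \<and> (\<forall>n\<ge>n0. dbar n \<omega> > 1)) \<longrightarrow>
          (\<forall>n\<ge>n0. \<exists>!\<theta>::real. \<theta> > 0 \<and> Phi \<theta> = 1 + \<theta> / dbar n \<omega>))"
proof (intro conjI ballI allI impI)
  show "emeasure (phi_inf \<theta>0) D0 = 1"
    using emeasure_phi_inf_D0[OF assms] .
next
  fix \<omega> :: "nat \<Rightarrow> nat" and n0 n :: nat
  assume "n0 \<ge> 1 \<and> (\<forall>n\<ge>n0. dbar n \<omega> > 1)" "n0 \<le> n"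
  then show "\<exists>!\<theta>::real. \<theta> > 0 \<and> Phi \<theta> = 1 + \<theta> / dbar n \<omega>"
    by (intro ex1_Phi_eq) blast
qed

end
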